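(* Let $X$ be a finite set, $b\in\mathbb{N}$, $(\varphi_i)_{i\in[1,b]}$ an individual bin evaluation, and $(X_1,\dots,X_\tau)$ a type partition of $X$. Let $X'\subseteq X$ and let $\vec p,\vec q\in\mathbb{N}_0^\tau$ be such that $|X_j\cap X'|\ge p_j$ and $|X_j\cap(X\setminus X')|\ge q_j$ for all $j\in[1,\tau]$. Then for every $i\in[1,b]$ there exist sets $X_{\vec p}\subseteq X'$ containing exactly $p_j$ elements of $X_j\cap X'$ for every $j$ and $X_{\vec q}\subseteq X\setminus X'$ containing exactly $q_j$ elements of $X_j\cap(X\setminus X')$ for every $j$, and the value $\varphi_i((X'\setminus X_{\vec p})\cup X_{\vec q})$ is the same for every such choice of $X_{\vec p}$ and $X_{\vec q}$ (so the type vector operation $\varphi_i((X'\setminus\vec p)\cup\vec q):=\varphi_i((X'\setminus X_{\vec p})\cup X_{\vec q})$ is well-defined).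
   Context: For integers $a\le b$, $[a,b]=\{i\in\mathbb{N}: a\le i\le b\}$. Fix $\mathrm{inf}\in\{\infty,-\infty\}$. An individual bin evaluation is a $b$-tuple $(\varphi_i)_{i\in[1,b]}$ of functions $\varphi_i:2^X\to\mathbb{Z}\cup\{\mathrm{inf}\}$. Two elements $x,y\in X$ are target equivalent if for every $i\in[1,b]$ and every $A\subseteq X$ with $\{x,y\}\cap A=\{x\}$ we have $\varphi_i((A\setminus\{x\})\cup\{y\})=\varphi_i(A)$. A type partition of $X$ is a tuple $(X_1,\dots,X_\tau)$ of pairwise disjoint sets with union $X$ such that the elements of each $X_j$ are pairwise target equivalent. *)

theory Defs
  imports Complex_Main "HOL-Library.Extended_Real"
begin

definition individual_bin_evaluation ::
  "'a set \<Rightarrow> nat \<Rightarrow> ereal \<Rightarrow> (nat \<Rightarrow> 'a set \<Rightarrow> ereal) \<Rightarrow> bool" where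
  "individual_bin_evaluation X b infv \<phi> \<longleftrightarrow>
     infv \<in> {\<infinity>, -\<infinity>} \<and>
     (\<forall>i\<in>{1..b}. \<forall>A. A \<subseteq> X \<longrightarrow> \<phi> i A \<in> {ereal (real_of_int k) | k. True} \<union> {infv})"

definition target_equivalent ::
  "'a set \<Rightarrow> nat \<Rightarrow> (nat \<Rightarrow> 'a set \<Rightarrow> ereal) \<Rightarrow> 'a \<Rightarrow> 'a \<Rightarrow> bool" where
  "target_equivalent X b \<phi> x y \<longleftrightarrow>
     (\<forall>i\<in>{1..b}. \<forall>A. A \<subseteq> X \<longrightarrow> {x, y} \<inter> A = {x} \<longrightarrow>
        \<phi> i ((A - {x}) \<union> {y}) = \<phi> i A)"

definition type_partition ::
  "'a set \<Rightarrow> nat \<Rightarrow> (nat \<Rightarrow> 'a set \<Rightarrow> ereal) \<Rightarrow> nat \<Rightarrow> (nat \<Rightarrow> 'a set) \<Rightarrow> bool" where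
  "type_partition X b \<phi> \<tau> Xs \<longleftrightarrow>
     (\<forall>j\<in>{1..\<tau>}. \<forall>k\<in>{1..\<tau>}. j \<noteq> k \<longrightarrow> Xs j \<inter> Xs k = {}) \<and>
     (\<Union>j\<in>{1..\<tau>}. Xs j) = X \<and>
     (\<forall>j\<in>{1..\<tau>}. \<forall>x\<in>Xs j. \<forall>y\<in>Xs j. target_equivalent X b \<phi> x y)"

definition type_selection :: "nat \<Rightarrow> (nat \<Rightarrow> 'a set) \<Rightarrow> 'a set \<Rightarrow> (nat \<Rightarrow> nat) \<Rightarrow> 'a set \<Rightarrow> bool" where
  "type_selection \<tau> Xs Y c S \<longleftrightarrow>
     S \<subseteq> Y \<and> (\<forall>j\<in>{1..\<tau>}. card (Xs j \<inter> Y \<inter> S) = c j)"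

end

theory Submission
  imports Defs "HOL-Library.Disjoint_Sets"
begin

text \<open>The value of \<open>\<phi> i\<close> on a subset of \<open>X\<close> depends only on its type counts
  \<open>|X\<^sub>j \<inter> A|\<close>: two subsets with the same type counts are connected by a chain of exchanges of
  an element for a target equivalent one of the same type, and each exchange leaves \<open>\<phi> i\<close>
  unchanged. Removing \<open>p\<^sub>j\<close> elements of \<open>X\<^sub>j \<inter> X'\<close> from \<open>X'\<close> and adding \<open>q\<^sub>j\<close> elements of
  \<open>X\<^sub>j - X'\<close> always leaves \<open>|X\<^sub>j \<inter> X'| - p\<^sub>j + q\<^sub>j\<close> elements of type \<open>j\<close>.
  Nothing about the values of \<open>\<phi>\<close> is used.\<close>

lemma type_partition_disjoint_family:
  "type_partition X b \<phi> \<tau> Xs \<Longrightarrow> disjoint_family_on Xs {1..\<tau>}"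
  unfolding type_partition_def disjoint_family_on_def by blast

lemma type_partition_Union:
  "type_partition X b \<phi> \<tau> Xs \<Longrightarrow> (\<Union>j\<in>{1..\<tau>}. Xs j) = X"
  unfolding type_partition_def by blast

lemma type_partition_swap:
  assumes "type_partition X b \<phi> \<tau> Xs" "j \<in> {1..\<tau>}" "i \<in> {1..b}"
    and "A \<subseteq> X" "x \<in> Xs j \<inter> A" "y \<in> Xs j - A"
  shows "\<phi> i (A - {x} \<union> {y}) = \<phi> i A"
proof -
  have "target_equivalent X b \<phi> x y"
    using assms(1,2,5,6) unfolding type_partition_def by blast
  then show ?thesis
    using assms(3-6) unfolding target_equivalent_def by blast
qed

lemma card_Int_swap:
  assumes "finite A" "x \<in> A" "y \<notin> A" "x \<in> S \<longleftrightarrow> y \<in> S"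
  shows "card (S \<inter> (A - {x} \<union> {y})) = card (S \<inter> A)"
proof (cases "x \<in> S")
  case True
  then have "S \<inter> (A - {x} \<union> {y}) = insert y (S \<inter> A - {x})" using assms by auto
  also have "card \<dots> = Suc (card (S \<inter> A - {x}))" using assms by simp
  also have "\<dots> = card (S \<inter> A)" using assms True by (intro card_Suc_Diff1) auto
  finally show ?thesis .
next
  case False
  then have "S \<inter> (A - {x} \<union> {y}) = S \<inter> A" using assms by auto
  then show ?thesis by simp
qed

lemma exchange_pair_if_type_counts_eq:
  assumes "finite A" "finite B" "A \<union> B \<subseteq> (\<Union>j\<in>J. Xs j)"
    and "\<forall>j\<in>J. card (Xs j \<inter> A) = card (Xs j \<inter> B)" "A \<noteq> B"
  obtains j x y where "j \<in> J" "x \<in> Xs j \<inter> (A - B)" "y \<in> Xs j \<inter> (B - A)"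
proof -
  obtain z where "z \<in> A \<union> B" "z \<notin> A \<inter> B" using \<open>A \<noteq> B\<close> by blast
  then obtain j where j: "j \<in> J" "z \<in> Xs j" using assms(3) by blast
  then have "Xs j \<inter> A \<noteq> Xs j \<inter> B" using \<open>z \<notin> A \<inter> B\<close> \<open>z \<in> A \<union> B\<close> by blast
  moreover have "card (Xs j \<inter> A) = card (Xs j \<inter> B)" using assms(4) j(1) by blast
  ultimately have "\<not> Xs j \<inter> A \<subseteq> Xs j \<inter> B" "\<not> Xs j \<inter> B \<subseteq> Xs j \<inter> A"
    using assms(1,2) by (metis card_subset_eq finite_Int)+
  then show ?thesis using that j(1) by blast
qed

lemma phi_eq_if_type_counts_eq:
  assumes "finite X" "type_partition X b \<phi> \<tau> Xs" "i \<in> {1..b}"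
    and "A \<subseteq> X" "B \<subseteq> X" "\<forall>j\<in>{1..\<tau>}. card (Xs j \<inter> A) = card (Xs j \<inter> B)"
  shows "\<phi> i A = \<phi> i B"
  using assms(4,6)
proof (induction "card (A - B)" arbitrary: A rule: less_induct)
  case less
  show ?case
  proof (cases "A = B")
    case False
    have fin: "finite A" "finite B" using assms(1,5) less.prems(1) finite_subset by blast+
    obtain j x y where j: "j \<in> {1..\<tau>}" and x: "x \<in> Xs j \<inter> (A - B)" and y: "y \<in> Xs j \<inter> (B - A)"
      using exchange_pair_if_type_counts_eq[OF fin _ less.prems(2) False]
        type_partition_Union[OF assms(2)] less.prems(1) assms(5) by blast
    define A' where "A' = A - {x} \<union> {y}"
    have "card (Xs k \<inter> A') = card (Xs k \<inter> B)" if k: "k \<in> {1..\<tau>}" for k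
    proof -
      have "x \<in> Xs k \<longleftrightarrow> y \<in> Xs k"
        using disjoint_family_onD[OF type_partition_disjoint_family[OF assms(2)] j k] x y by blast
      then have "card (Xs k \<inter> A') = card (Xs k \<inter> A)"
        unfolding A'_def using x y by (intro card_Int_swap[OF fin(1)]) auto
      then show ?thesis using less.prems(2) k by simp
    qed
    moreover have "A' - B = A - B - {x}" unfolding A'_def using x y by blast
    then have "card (A' - B) < card (A - B)"
      using fin(1) x by (metis card_Diff1_less finite_Diff DiffI IntE)
    moreover have "A' \<subseteq> X" unfolding A'_def using less.prems(1) y assms(5) by blast
    ultimately have "\<phi> i A' = \<phi> i B" using less.hyps[of A'] by blast
    moreover have "\<phi> i A' = \<phi> i A"
      unfolding A'_def using type_partition_swap[OF assms(2) j assms(3) less.prems(1)] x y by blast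
    ultimately show ?thesis by simp
  qed simp
qed

lemma type_selection_exists:
  assumes "disjoint_family_on Xs {1..\<tau>}" "\<forall>j\<in>{1..\<tau>}. c j \<le> card (Xs j \<inter> Y)"
  shows "\<exists>S. type_selection \<tau> Xs Y c S"
proof -
  have "\<exists>T. T \<subseteq> Xs j \<inter> Y \<and> card T = c j" if "j \<in> {1..\<tau>}" for j
    using obtain_subset_with_card_n[OF bspec[OF assms(2) that]] by blast
  then obtain T where T: "\<And>j. j \<in> {1..\<tau>} \<Longrightarrow> T j \<subseteq> Xs j \<inter> Y \<and> card (T j) = c j"
    by metis
  have "(\<Union>k\<in>{1..\<tau>}. T k) \<subseteq> Y" using T by blast
  moreover have "Xs j \<inter> Y \<inter> (\<Union>k\<in>{1..\<tau>}. T k) = T j" if j: "j \<in> {1..\<tau>}" for j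
  proof (intro equalityI subsetI)
    fix z assume "z \<in> Xs j \<inter> Y \<inter> (\<Union>k\<in>{1..\<tau>}. T k)"
    then obtain k where k: "k \<in> {1..\<tau>}" "z \<in> T k" "z \<in> Xs j" by blast
    then have "k = j" using T[OF k(1)] disjoint_family_onD[OF assms(1) j k(1)] by blast
    then show "z \<in> T j" using k by simp
  qed (use T j in blast)
  ultimately have "type_selection \<tau> Xs Y c (\<Union>k\<in>{1..\<tau>}. T k)"
    using T unfolding type_selection_def by simp
  then show ?thesis ..
qed

lemma card_type_after_exchange:
  assumes "finite X" "X' \<subseteq> X"
    and "type_selection \<tau> Xs X' p Xp" "type_selection \<tau> Xs (X - X') q Xq" "j \<in> {1..\<tau>}"
  shows "card (Xs j \<inter> (X' - Xp \<union> Xq)) = card (Xs j \<inter> X') - p j + q j"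
proof -
  have sub: "Xp \<subseteq> X'" "Xq \<subseteq> X - X'" using assms(3,4) unfolding type_selection_def by auto
  have fin: "finite (Xs j \<inter> X')" "finite (Xs j \<inter> (X - X') \<inter> Xq)"
    using assms(1,2) finite_subset by blast+
  have "Xs j \<inter> (X' - Xp \<union> Xq) = (Xs j \<inter> X' - Xs j \<inter> X' \<inter> Xp) \<union> Xs j \<inter> (X - X') \<inter> Xq"
    using sub by blast
  also have "card \<dots> = card (Xs j \<inter> X' - Xs j \<inter> X' \<inter> Xp) + card (Xs j \<inter> (X - X') \<inter> Xq)"
    using fin by (intro card_Un_disjoint) auto
  also have "\<dots> = card (Xs j \<inter> X') - card (Xs j \<inter> X' \<inter> Xp) + card (Xs j \<inter> (X - X') \<inter> Xq)"
    using fin by (subst card_Diff_subset) auto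
  finally show ?thesis using assms(3-5) unfolding type_selection_def by simp
qed

theorem proposition8:
  fixes X X' :: "'a set" and b \<tau> :: nat and infv :: ereal
    and \<phi> :: "nat \<Rightarrow> 'a set \<Rightarrow> ereal" and Xs :: "nat \<Rightarrow> 'a set"
    and p q :: "nat \<Rightarrow> nat"
  assumes "finite X"
    and "individual_bin_evaluation X b infv \<phi>"
    and "type_partition X b \<phi> \<tau> Xs"
    and "X' \<subseteq> X"
    and "\<forall>j\<in>{1..\<tau>}. card (Xs j \<inter> X') \<ge> p j"
    and "\<forall>j\<in>{1..\<tau>}. card (Xs j \<inter> (X - X')) \<ge> q j"
  shows "\<forall>i\<in>{1..b}.
     (\<exists>Xp Xq. type_selection \<tau> Xs X' p Xp \<and> type_selection \<tau> Xs (X - X') q Xq) \<and>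
     (\<forall>Xp Xq Xp' Xq'.
        type_selection \<tau> Xs X' p Xp \<and> type_selection \<tau> Xs (X - X') q Xq \<and>
        type_selection \<tau> Xs X' p Xp' \<and> type_selection \<tau> Xs (X - X') q Xq' \<longrightarrow>
        \<phi> i ((X' - Xp) \<union> Xq) = \<phi> i ((X' - Xp') \<union> Xq'))"
proof (intro ballI conjI allI impI)
  have disj: "disjoint_family_on Xs {1..\<tau>}"
    using assms(3) by (rule type_partition_disjoint_family)
  show "\<exists>Xp Xq. type_selection \<tau> Xs X' p Xp \<and> type_selection \<tau> Xs (X - X') q Xq"
    using type_selection_exists[OF disj assms(5)] type_selection_exists[OF disj assms(6)] by blast
next
  fix i Xp Xq Xp' Xq'
  assume i: "i \<in> {1..b}" and sel: "type_selection \<tau> Xs X' p Xp \<and> type_selection \<tau> Xs (X - X') q Xq \<and>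
    type_selection \<tau> Xs X' p Xp' \<and> type_selection \<tau> Xs (X - X') q Xq'"
  show "\<phi> i ((X' - Xp) \<union> Xq) = \<phi> i ((X' - Xp') \<union> Xq')"
  proof (rule phi_eq_if_type_counts_eq[OF assms(1,3) i])
    show "X' - Xp \<union> Xq \<subseteq> X" "X' - Xp' \<union> Xq' \<subseteq> X"
      using sel assms(4) unfolding type_selection_def by auto
    show "\<forall>j\<in>{1..\<tau>}. card (Xs j \<inter> (X' - Xp \<union> Xq)) = card (Xs j \<inter> (X' - Xp' \<union> Xq'))"
      using card_type_after_exchange[OF assms(1,4)] sel by metis
  qed
qed

end
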